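(* Let $N$ be a tree rooted at $g$ with positive edge capacities and leaf set $L$, and let $G_R$ be a request graph on $V\cup\{g\}$, $|V|=k$, with bandwidths $f_e\ge0$. Let $T$ be the binary tree obtained from $N$ by Create-Binary-Tree, and run the dynamic program described in the context (Algorithm 2) on $T$ and $G_R$. Then the value $\mathrm{cong}[g,V]$ it returns equals the minimum, over all embeddings $\pi:V\to L$, of the congestion of $\pi$ in $N$.
   Context: Embedding problem: an embedding is an injective map $\pi:V\to L$ with $\pi(g)=g$; request edges are $(v_i,g)$ (type I, set $R^{I}$) or $(v_i,v_j)$ (type II, set $R^{II}$); the congestion of an edge $e$ of the host tree is $\frac1{c_e}\sum f_{(u,v)}$ over request edges $(u,v)$ whose host path between $\pi(u)$ and $\pi(v)$ contains $e$, and the congestion of $\pi$ is the maximum over host edges. Create-Binary-Tree$(N,g)$: for every node $v$ of $N$ of degree $>3$ with children $u_1,\dots,u_d$ via edges $e_1,\dots,e_d$, replace these edges by a binary tree rooted at $v$ with leaves $u_1,\dots,u_d$; the edge into $u_i$ gets capacity $c_{e_i}$, all other new edges capacity $\infty$. Algorithm 2: for a node $u$ of $T$ let $e_u$ be the edge from its parent to $u$, $u_l,u_r$ its left and right children, and $e_l,e_r$ the edges to them; $L^j$ is the set of nodes at distance $j$ from $g$ and $H$ the height of $T$. For each $S\subseteq V$ set $\mathrm{Flow}[S]=\sum_{(v,g)\in R^{I},v\in S}f_{(v,g)}+\sum_{(u,v)\in R^{II},u\in S,v\notin S}f_{(u,v)}$. For each leaf $u$ and $S\subseteq V$ set $\mathrm{cong}[u,S]=0$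 if $|S|\le1$ and $\infty$ otherwise. For $j=H,H-1,\dots,0$ and each non-leaf $u\in L^j$ and each $S\subseteq V$, set $\mathrm{cong}[u,S]=\min_{S_l\subseteq S}\max\{\mathrm{cong}[u_l,S_l],\mathrm{cong}[u_r,S\setminus S_l],\mathrm{Flow}[S_l]/c_{e_l},\mathrm{Flow}[S\setminus S_l]/c_{e_r}\}$ (recording a minimizing partition). Return $\mathrm{cong}[g,V]$. *)

theory Defs
  imports Main "HOL-Library.Multiset" "HOL-Library.Extended_Real"
begin

text \<open>A rooted host tree: a node label together with the list of its children,
  each child given with the (real) capacity of the edge from the node to that child.
  Node labels are assumed distinct (see host_tree_ok).\<close>
datatype 'a ntree = Nd 'a "('a ntree \<times> real) list"

fun root :: "'a ntree \<Rightarrow> 'a" where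
  "root (Nd v cs) = v"

fun children :: "'a ntree \<Rightarrow> ('a ntree \<times> real) list" where
  "children (Nd v cs) = cs"

fun labels :: "'a ntree \<Rightarrow> 'a list" where
  "labels (Nd v cs) = v # concat (map (\<lambda>p. labels (fst p)) cs)"

text \<open>All edges of the tree; an edge is represented by the subtree it leads into
  together with its capacity.\<close>
fun edges :: "'a ntree \<Rightarrow> ('a ntree \<times> real) list" where
  "edges (Nd v cs) = cs @ concat (map (\<lambda>p. edges (fst p)) cs)"

fun leaves :: "'a ntree \<Rightarrow> 'a set" where
  "leaves (Nd v cs) = (if cs = [] then {v} else (\<Union>p\<in>set cs. leaves (fst p)))"

definition host_tree_ok :: "'a ntree \<Rightarrow> bool" where
  "host_tree_ok N \<longleftrightarrow> distinct (labels N) \<and> (\<forall>e\<in>set (edges N). snd e > 0)"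

text \<open>The edge from the parent of the subtree c into c lies on the (unique) host path
  between nodes x and y iff exactly one of x, y lies in the subtree rooted at c.\<close>
definition on_path :: "'a \<Rightarrow> 'a \<Rightarrow> 'a ntree \<Rightarrow> bool" where
  "on_path x y c \<longleftrightarrow> ((x \<in> set (labels c)) \<noteq> (y \<in> set (labels c)))"

text \<open>Request edges of type I are (v,g) for v in RI, with bandwidth fI v;
  request edges of type II are the pairs (u,v) in RII, with bandwidth fII (u,v).\<close>

definition is_embedding :: "'a ntree \<Rightarrow> 'a \<Rightarrow> 'a set \<Rightarrow> ('a \<Rightarrow> 'a) \<Rightarrow> bool" where
  "is_embedding N g V \<pi> \<longleftrightarrow> \<pi> g = g \<and> inj_on \<pi> (insert g V) \<and> \<pi> ` V \<subseteq> leaves N"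

definition edge_load ::
  "'a set \<Rightarrow> ('a \<times> 'a) set \<Rightarrow> ('a \<Rightarrow> real) \<Rightarrow> ('a \<times> 'a \<Rightarrow> real) \<Rightarrow> 'a \<Rightarrow> ('a \<Rightarrow> 'a)
     \<Rightarrow> 'a ntree \<Rightarrow> real" where
  "edge_load RI RII fI fII g \<pi> c =
     (\<Sum>v\<in>RI. if on_path (\<pi> v) (\<pi> g) c then fI v else 0)
   + (\<Sum>e\<in>RII. if on_path (\<pi> (fst e)) (\<pi> (snd e)) c then fII e else 0)"

definition congestion ::
  "'a ntree \<Rightarrow> 'a set \<Rightarrow> ('a \<times> 'a) set \<Rightarrow> ('a \<Rightarrow> real) \<Rightarrow> ('a \<times> 'a \<Rightarrow> real) \<Rightarrow> 'a
     \<Rightarrow> ('a \<Rightarrow> 'a) \<Rightarrow> real" where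
  "congestion N RI RII fI fII g \<pi> =
     Max ((\<lambda>e. edge_load RI RII fI fII g \<pi> (fst e) / snd e) ` set (edges N))"

text \<open>Binary trees with edge capacities in ereal (new edges get capacity \<infinity>).
  Leaves keep their label; a node has one or two children.\<close>
datatype 'a btree = BLeaf 'a | BUn "'a btree" ereal | BBin "'a btree" ereal "'a btree" ereal

text \<open>combs M x: x = (t, c) is a binary tree t hanging below an edge of capacity c
  whose leaves are exactly the items of M (each item a subtree with the capacity
  of the edge into it); all newly created edges have capacity \<infinity>.\<close>
inductive combs :: "('a btree \<times> ereal) multiset \<Rightarrow> ('a btree \<times> ereal) \<Rightarrow> bool" where
  single: "combs {#x#} x"
| bin: "combs A (ta, ca) \<Longrightarrow> combs B (tb, cb) \<Longrightarrow> combs (A + B) (BBin ta ca tb cb, \<infinity>)"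
| un: "combs A (t, c) \<Longrightarrow> combs A (BUn t c, \<infinity>)"

text \<open>cbt N T: T is a possible output of Create-Binary-Tree(N, g): nodes with at most
  two children are kept, a node with d > 2 children is replaced by a binary tree
  rooted at it whose leaves are its (recursively transformed) children.\<close>
inductive cbt :: "'a ntree \<Rightarrow> 'a btree \<Rightarrow> bool" where
  leaf: "cbt (Nd v []) (BLeaf v)"
| one: "cbt c t \<Longrightarrow> cbt (Nd v [(c, x)]) (BUn t (ereal x))"
| two: "cbt c1 t1 \<Longrightarrow> cbt c2 t2 \<Longrightarrow>
          cbt (Nd v [(c1, x1), (c2, x2)]) (BBin t1 (ereal x1) t2 (ereal x2))"
| many: "length cs > 2 \<Longrightarrow> length ts = length cs \<Longrightarrow>
          (\<forall>i<length cs. cbt (fst (cs ! i)) (fst (ts ! i)) \<and> snd (ts ! i) = ereal (snd (cs ! i))) \<Longrightarrow>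
          combs (mset ts) (T, \<infinity>) \<Longrightarrow> cbt (Nd v cs) T"

text \<open>Flow[S]: total bandwidth of request edges with exactly one endpoint in S
  (for type I edges (v,g): v in S, as g is never in S).\<close>
definition Flow :: "'a set \<Rightarrow> ('a \<times> 'a) set \<Rightarrow> ('a \<Rightarrow> real) \<Rightarrow> ('a \<times> 'a \<Rightarrow> real) \<Rightarrow> 'a set \<Rightarrow> real" where
  "Flow RI RII fI fII S =
     (\<Sum>v\<in>RI. if v \<in> S then fI v else 0)
   + (\<Sum>e\<in>RII. if (fst e \<in> S) \<noteq> (snd e \<in> S) then fII e else 0)"

text \<open>The table cong[u,S], computed bottom-up (here: by structural recursion).
  For a node with a single child the missing child is treated as an empty subtree.\<close>
fun dp_cong :: "('a set \<Rightarrow> real) \<Rightarrow> 'a btree \<Rightarrow> 'a set \<Rightarrow> ereal" where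
  "dp_cong Fl (BLeaf u) S = (if card S \<le> 1 then 0 else \<infinity>)"
| "dp_cong Fl (BUn t c) S = max (dp_cong Fl t S) (ereal (Fl S) / c)"
| "dp_cong Fl (BBin l cl r cr) S =
     (INF Sl\<in>Pow S. max (max (dp_cong Fl l Sl) (dp_cong Fl r (S - Sl)))
                        (max (ereal (Fl Sl) / cl) (ereal (Fl (S - Sl)) / cr)))"

end

theory Submission
  imports Defs
begin

text \<open>For a subtree c of the host tree and a set S of requests, let the optimal placement cost
  of S in c be the least bottleneck, over injective placements of S on the leaves of c, of
  Flow of the requests placed below an edge divided by its capacity. Edges into different
  children of a node see disjoint parts of S, so the optimal cost at a node is the minimum,
  over ordered partitions of S among the children, of the maximum of the children's optimal
  costs and the loads on the edges into them. This min-max convolution is associative and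
  commutative, and edges of capacity \<infinity> contribute nothing; hence every binary tree produced
  by Create-Binary-Tree computes the same values bottom-up as the original tree. Finally, the
  root g lies below no edge, so the load of an edge under an embedding is Flow of the requests
  placed below it, and the optimal placement cost of V in N is the minimum congestion.\<close>

section \<open>Min-max convolution of set functions\<close>

fun minmax_conv :: "('s set \<Rightarrow> ereal) list \<Rightarrow> 's set \<Rightarrow> ereal" where
  "minmax_conv [] S = (if S = {} then 0 else \<infinity>)"
| "minmax_conv (h # hs) S = (INF S1\<in>Pow S. max (h S1) (minmax_conv hs (S - S1)))"

lemma max_INF: "max (x::ereal) (INF i\<in>I. f i) = (INF i\<in>I. max x (f i))"
  using sup_INF[of x f I] by (simp add: sup_max)

lemma le_max_INF:
  fixes r z :: ereal
  assumes "\<And>a b. a \<in> A \<Longrightarrow> b \<in> B \<Longrightarrow> r \<le> max (max (f a) z) (g b)"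
  shows "r \<le> max (max (INF a\<in>A. f a) z) (INF b\<in>B. g b)"
proof (rule ccontr)
  assume "\<not> ?thesis"
  then have "(INF a\<in>A. f a) < r" "z < r" "(INF b\<in>B. g b) < r"
    by (simp_all add: not_le)
  then obtain a b where "a \<in> A" "f a < r" "b \<in> B" "g b < r"
    by (auto simp: INF_less_iff)
  with \<open>z < r\<close> assms show False
    by (metis max_less_iff_conj not_le)
qed

lemma minmax_conv_nonneg: "0 \<le> minmax_conv hs S"
  by (induction hs arbitrary: S) (auto simp: le_max_iff_disj le_INF_iff)

lemma minmax_conv_single: "minmax_conv [h] S = max (h S) 0"
proof (rule antisym)
  show "minmax_conv [h] S \<le> max (h S) 0"
    unfolding minmax_conv.simps by (rule INF_lower2[of S]) auto
  show "max (h S) 0 \<le> minmax_conv [h] S"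
  proof (unfold minmax_conv.simps(2), rule INF_greatest)
    fix S1 assume "S1 \<in> Pow S"
    then show "max (h S) 0 \<le> max (h S1) (minmax_conv [] (S - S1))"
      by (cases "S1 = S") auto
  qed
qed

lemma minmax_conv_append:
  "minmax_conv (fs @ gs) S = (INF S1\<in>Pow S. max (minmax_conv fs S1) (minmax_conv gs (S - S1)))"
proof (induction fs arbitrary: S)
  case Nil
  show ?case
  proof (rule antisym)
    show "minmax_conv ([] @ gs) S \<le> (INF S1\<in>Pow S. max (minmax_conv [] S1) (minmax_conv gs (S - S1)))"
    proof (rule INF_greatest)
      fix S1 assume "S1 \<in> Pow S"
      then show "minmax_conv ([] @ gs) S \<le> max (minmax_conv [] S1) (minmax_conv gs (S - S1))"
        by (cases "S1 = {}") auto
    qed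
    show "(INF S1\<in>Pow S. max (minmax_conv [] S1) (minmax_conv gs (S - S1))) \<le> minmax_conv ([] @ gs) S"
      by (rule INF_lower2[of "{}"]) (auto simp: minmax_conv_nonneg max_def)
  qed
next
  case (Cons f fs)
  have "minmax_conv ((f # fs) @ gs) S =
      (INF S1\<in>Pow S. INF S2\<in>Pow (S - S1).
         max (f S1) (max (minmax_conv fs S2) (minmax_conv gs (S - S1 - S2))))"
    by (simp add: Cons.IH max_INF)
  also have "\<dots> = (INF T\<in>Pow S. INF S1\<in>Pow T.
      max (max (f S1) (minmax_conv fs (T - S1))) (minmax_conv gs (S - T)))"
    (is "?L = ?R")
  \<comment> \<open>reindex the pairs (S1, S2) by (S1 \<union> S2, S1)\<close>
  proof (rule antisym; intro INF_greatest)
    fix T S1 assume "T \<in> Pow S" "S1 \<in> Pow T"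
    then have "S1 \<in> Pow S" "T - S1 \<in> Pow (S - S1)" "S - S1 - (T - S1) = S - T" by auto
    then show "?L \<le> max (max (f S1) (minmax_conv fs (T - S1))) (minmax_conv gs (S - T))"
      by (intro INF_lower2[of S1] INF_lower2[of "T - S1"]) (simp_all add: max.assoc)
  next
    fix S1 S2 assume "S1 \<in> Pow S" "S2 \<in> Pow (S - S1)"
    then have "S1 \<union> S2 \<in> Pow S" "S1 \<in> Pow (S1 \<union> S2)" "S1 \<union> S2 - S1 = S2"
      "S - (S1 \<union> S2) = S - S1 - S2" by auto
    then show "?R \<le> max (f S1) (max (minmax_conv fs S2) (minmax_conv gs (S - S1 - S2)))"
      by (intro INF_lower2[of "S1 \<union> S2"] INF_lower2[of S1]) (simp_all add: max.assoc)
  qed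
  also have "\<dots> = (INF T\<in>Pow S. max (minmax_conv (f # fs) T) (minmax_conv gs (S - T)))"
    by (simp add: max_INF max.commute[of _ "minmax_conv gs _"])
  finally show ?case .
qed

lemma minmax_conv_pair: "minmax_conv [a, b] S = (INF S1\<in>Pow S. max (a S1) (max (b (S - S1)) 0))"
  by (simp only: minmax_conv.simps(2)[of a] minmax_conv_single)

lemma minmax_conv_pair_commute: "minmax_conv [a, b] S = minmax_conv [b, a] S"
proof -
  have compl: "(\<lambda>T. S - T) ` Pow S = Pow S"
    by (auto simp: image_iff)
  have "minmax_conv [b, a] S = (INF T\<in>(\<lambda>T. S - T) ` Pow S. max (b T) (max (a (S - T)) 0))"
    by (simp only: minmax_conv_pair compl)
  also have "\<dots> = (INF S1\<in>Pow S. max (b (S - S1)) (max (a S1) 0))"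
    by (auto simp: image_comp Diff_Diff_Int Int_absorb1 intro!: INF_cong)
  also have "\<dots> = minmax_conv [a, b] S"
    by (simp add: minmax_conv_pair max.assoc max.left_commute max.commute del: minmax_conv.simps)
  finally show ?thesis ..
qed

lemma minmax_conv_swap: "minmax_conv (a # b # r) = minmax_conv (b # a # r)"
proof
  fix S
  have "minmax_conv ([a, b] @ r) S = minmax_conv ([b, a] @ r) S"
    by (simp only: minmax_conv_append minmax_conv_pair_commute)
  then show "minmax_conv (a # b # r) S = minmax_conv (b # a # r) S" by simp
qed

lemma minmax_conv_move_front: "minmax_conv (g1 @ f # g2) = minmax_conv (f # g1 @ g2)"
proof (induction g1)
  case (Cons a g1)
  have "minmax_conv (a # f # g1 @ g2) = minmax_conv (f # a # g1 @ g2)"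
    by (rule minmax_conv_swap)
  with Cons show ?case by (simp add: fun_eq_iff)
qed simp

lemma minmax_conv_perm: "mset fs = mset gs \<Longrightarrow> minmax_conv fs = minmax_conv gs"
proof (induction fs arbitrary: gs)
  case (Cons f fs)
  then obtain g1 g2 where gs: "gs = g1 @ f # g2"
    by (metis list.set_intros(1) set_mset_mset split_list)
  with Cons have "minmax_conv fs = minmax_conv (g1 @ g2)" by simp
  then show ?case
    by (simp add: gs minmax_conv_move_front fun_eq_iff)
qed simp

lemma minmax_conv_cong:
  "list_all2 (\<lambda>f g. \<forall>T\<subseteq>S. f T = g T) fs gs \<Longrightarrow> minmax_conv fs S = minmax_conv gs S"
proof (induction fs arbitrary: gs S)
  case (Cons f fs)
  then obtain g gs' where gs: "gs = g # gs'" and fg: "\<forall>T\<subseteq>S. f T = g T"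
    and rest: "list_all2 (\<lambda>f g. \<forall>T\<subseteq>S. f T = g T) fs gs'"
    by (cases gs) auto
  show ?case unfolding gs minmax_conv.simps
  proof (rule INF_cong[OF refl])
    fix S1 assume "S1 \<in> Pow S"
    have "list_all2 (\<lambda>f g. \<forall>T\<subseteq>S - S1. f T = g T) fs gs'"
      using rest by (rule list_all2_mono) auto
    then show "max (f S1) (minmax_conv fs (S - S1)) = max (g S1) (minmax_conv gs' (S - S1))"
      using Cons.IH fg \<open>S1 \<in> Pow S\<close> by simp
  qed
qed simp

definition forest_labels :: "('a ntree \<times> real) list \<Rightarrow> 'a list" where
  "forest_labels cs = concat (map (\<lambda>p. labels (fst p)) cs)"

definition forest_leaves :: "('a ntree \<times> real) list \<Rightarrow> 'a set" where
  "forest_leaves cs = (\<Union>p\<in>set cs. leaves (fst p))"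

definition forest_edges :: "('a ntree \<times> real) list \<Rightarrow> ('a ntree \<times> real) list" where
  "forest_edges cs = cs @ concat (map (\<lambda>p. edges (fst p)) cs)"

lemma leaves_subset_labels: "leaves t \<subseteq> set (labels t)"
  by (induction t rule: leaves.induct) (fastforce split: if_split_asm)

lemma labels_edge_subset: "e \<in> set (edges t) \<Longrightarrow> set (labels (fst e)) \<subseteq> set (labels t)"
  by (induction t arbitrary: e rule: edges.induct) fastforce

lemma forest_leaves_subset_labels: "forest_leaves cs \<subseteq> set (forest_labels cs)"
  using leaves_subset_labels by (fastforce simp: forest_leaves_def forest_labels_def)

lemma labels_forest_edge_subset:
  "e \<in> set (forest_edges cs) \<Longrightarrow> set (labels (fst e)) \<subseteq> set (forest_labels cs)"
  using labels_edge_subset by (fastforce simp: forest_edges_def forest_labels_def)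

lemma forest_labels_Cons:
  "forest_labels ((c, x) # cs) = labels c @ forest_labels cs"
  by (simp add: forest_labels_def)

lemma forest_leaves_Cons: "forest_leaves ((c, x) # cs) = leaves c \<union> forest_leaves cs"
  by (simp add: forest_leaves_def)

lemma set_forest_edges_Cons:
  "set (forest_edges ((c, x) # cs)) = insert (c, x) (set (edges c) \<union> set (forest_edges cs))"
  by (auto simp: forest_edges_def)

lemma root_notin_leaves: "distinct (labels (Nd g cs)) \<Longrightarrow> cs \<noteq> [] \<Longrightarrow> g \<notin> leaves (Nd g cs)"
  using forest_leaves_subset_labels[of cs] by (auto simp: forest_leaves_def forest_labels_def)

lemma root_notin_edge_labels:
  "distinct (labels (Nd g cs)) \<Longrightarrow> e \<in> set (edges (Nd g cs)) \<Longrightarrow> g \<notin> set (labels (fst e))"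
  using labels_forest_edge_subset[of e cs] by (auto simp: forest_edges_def forest_labels_def)

lemma distinct_labels_child:
  "distinct (labels (Nd v cs)) \<Longrightarrow> p \<in> set cs \<Longrightarrow> distinct (labels (fst p))"
  by (simp add: distinct_concat_iff)

section \<open>Optimal placements\<close>

text \<open>The 0 is inserted so that a leaf, which has no edges, costs 0 rather than -\<infinity>.\<close>

definition placement_cost ::
  "('v set \<Rightarrow> real) \<Rightarrow> ('a ntree \<times> real) list \<Rightarrow> 'v set \<Rightarrow> ('v \<Rightarrow> 'a) \<Rightarrow> ereal" where
  "placement_cost F es S \<pi> =
     Sup (insert 0 ((\<lambda>e. ereal (F {s\<in>S. \<pi> s \<in> set (labels (fst e))}) / ereal (snd e)) ` set es))"

definition placements :: "'v set \<Rightarrow> 'a set \<Rightarrow> ('v \<Rightarrow> 'a) set" where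
  "placements S L = {\<pi>. inj_on \<pi> S \<and> \<pi> ` S \<subseteq> L}"

definition opt_cost :: "('v set \<Rightarrow> real) \<Rightarrow> 'a ntree \<Rightarrow> 'v set \<Rightarrow> ereal" where
  "opt_cost F c S = (INF \<pi>\<in>placements S (leaves c). placement_cost F (edges c) S \<pi>)"

definition child_costs ::
  "('v set \<Rightarrow> real) \<Rightarrow> ('a ntree \<times> real) list \<Rightarrow> ('v set \<Rightarrow> ereal) list" where
  "child_costs F cs = map (\<lambda>(c, x) S. max (opt_cost F c S) (ereal (F S) / ereal x)) cs"

lemma child_costs_Cons:
  "child_costs F ((c, x) # cs) = (\<lambda>S. max (opt_cost F c S) (ereal (F S) / ereal x)) # child_costs F cs"
  by (simp add: child_costs_def)

lemma placement_cost_nonneg: "0 \<le> placement_cost F es S \<pi>"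
  unfolding placement_cost_def by (simp add: Sup_upper)

lemma opt_cost_nonneg: "0 \<le> opt_cost F c S"
  unfolding opt_cost_def by (simp add: placement_cost_nonneg le_INF_iff)

lemma placement_cost_cong:
  "(\<And>s. s \<in> S \<Longrightarrow> \<pi> s = \<pi>' s) \<Longrightarrow> placement_cost F es S \<pi> = placement_cost F es S \<pi>'"
proof -
  assume "\<And>s. s \<in> S \<Longrightarrow> \<pi> s = \<pi>' s"
  then have "\<And>L. {s\<in>S. \<pi> s \<in> L} = {s\<in>S. \<pi>' s \<in> L}" by auto
  then show ?thesis unfolding placement_cost_def by simp
qed

lemma placement_cost_forest_Cons:
  assumes dist: "distinct (forest_labels ((c, x) # cs))"
    and im: "\<pi> ` S \<subseteq> forest_leaves ((c, x) # cs)"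
    and S1: "S1 = {s\<in>S. \<pi> s \<in> leaves c}"
  shows "placement_cost F (forest_edges ((c, x) # cs)) S \<pi> =
    max (max (placement_cost F (edges c) S1 \<pi>) (ereal (F S1) / ereal x))
        (placement_cost F (forest_edges cs) (S - S1) \<pi>)"
proof -
  have disj: "set (labels c) \<inter> set (forest_labels cs) = {}"
    using dist by (simp add: forest_labels_Cons)
  have split: "\<pi> s \<in> leaves c \<or> \<pi> s \<in> forest_leaves cs" if "s \<in> S" for s
    using im that by (auto simp: forest_leaves_Cons)
  note sub = leaves_subset_labels[of c] forest_leaves_subset_labels[of cs]
  let ?g = "\<lambda>T e. ereal (F {s\<in>T. \<pi> s \<in> set (labels (fst e))}) / ereal (snd e)"
  have inner: "?g S ` set (edges c) = ?g S1 ` set (edges c)"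
  proof (rule image_cong[OF refl])
    fix e assume "e \<in> set (edges c)"
    then have "{s\<in>S. \<pi> s \<in> set (labels (fst e))} = {s\<in>S1. \<pi> s \<in> set (labels (fst e))}"
      using labels_edge_subset[of e c] split disj sub S1 by blast
    then show "?g S e = ?g S1 e" by simp
  qed
  have outer: "?g S ` set (forest_edges cs) = ?g (S - S1) ` set (forest_edges cs)"
  proof (rule image_cong[OF refl])
    fix e assume "e \<in> set (forest_edges cs)"
    then have "{s\<in>S. \<pi> s \<in> set (labels (fst e))} = {s\<in>S - S1. \<pi> s \<in> set (labels (fst e))}"
      using labels_forest_edge_subset[of e cs] disj sub S1 by blast
    then show "?g S e = ?g (S - S1) e" by simp
  qed
  have top: "{s\<in>S. \<pi> s \<in> set (labels c)} = S1"
    using split disj sub S1 by blast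
  have "placement_cost F (forest_edges ((c, x) # cs)) S \<pi> = Sup (insert 0
      (insert (?g S (c, x)) (?g S ` set (edges c) \<union> ?g S ` set (forest_edges cs))))"
    by (simp only: placement_cost_def set_forest_edges_Cons image_insert image_Un)
  also have "\<dots> = Sup (insert 0 (insert (ereal (F S1) / ereal x)
      (?g S1 ` set (edges c) \<union> ?g (S - S1) ` set (forest_edges cs))))"
    by (simp only: inner outer top fst_conv snd_conv)
  also have "\<dots> = max (max (placement_cost F (edges c) S1 \<pi>) (ereal (F S1) / ereal x))
        (placement_cost F (forest_edges cs) (S - S1) \<pi>)"
  proof -
    have "\<And>(z::ereal) X Y. Sup (insert 0 (insert z (X \<union> Y))) =
        sup (sup (sup 0 (Sup X)) z) (sup 0 (Sup Y))"
      by (simp add: Sup_union_distrib ac_simps sup.left_idem)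
    then show ?thesis
      unfolding placement_cost_def by (simp only: sup_max Sup_insert)
  qed
  finally show ?thesis .
qed

definition forest_opt_cost :: "('v set \<Rightarrow> real) \<Rightarrow> ('a ntree \<times> real) list \<Rightarrow> 'v set \<Rightarrow> ereal" where
  "forest_opt_cost F cs S =
     (INF \<pi>\<in>placements S (forest_leaves cs). placement_cost F (forest_edges cs) S \<pi>)"

text \<open>The two placements are glued along S1; their images are disjoint since the leaf sets are.\<close>

lemma forest_opt_cost_Cons_le:
  assumes dist: "distinct (forest_labels ((c, x) # cs))" and "S1 \<subseteq> S"
  shows "forest_opt_cost F ((c, x) # cs) S
    \<le> max (max (opt_cost F c S1) (ereal (F S1) / ereal x)) (forest_opt_cost F cs (S - S1))"
  unfolding opt_cost_def forest_opt_cost_def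
proof (rule le_max_INF)
  fix \<pi>1 \<pi>2
  assume \<pi>1: "\<pi>1 \<in> placements S1 (leaves c)"
    and \<pi>2: "\<pi>2 \<in> placements (S - S1) (forest_leaves cs)"
  define \<pi> where "\<pi> = (\<lambda>s. if s \<in> S1 then \<pi>1 s else \<pi>2 s)"
  have disj: "leaves c \<inter> forest_leaves cs = {}"
    using dist leaves_subset_labels[of c] forest_leaves_subset_labels[of cs]
    by (auto simp: forest_labels_Cons)
  have "inj_on \<pi> S1" "inj_on \<pi> (S - S1)"
    using \<pi>1 \<pi>2 by (auto simp: placements_def \<pi>_def inj_on_def)
  moreover have "\<pi> ` S1 \<subseteq> leaves c" "\<pi> ` (S - S1) \<subseteq> forest_leaves cs"
    using \<pi>1 \<pi>2 by (auto simp: placements_def \<pi>_def)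
  ultimately have "inj_on \<pi> (S1 \<union> (S - S1))"
    using disj by (subst inj_on_Un) blast
  then have "inj_on \<pi> S"
    using \<open>S1 \<subseteq> S\<close> by (simp add: Un_absorb1)
  moreover have "\<pi> ` S \<subseteq> leaves c \<union> forest_leaves cs"
    using \<open>\<pi> ` S1 \<subseteq> leaves c\<close> \<open>\<pi> ` (S - S1) \<subseteq> forest_leaves cs\<close> by blast
  ultimately have P: "\<pi> \<in> placements S (forest_leaves ((c, x) # cs))"
    by (simp add: placements_def forest_leaves_Cons)
  have S1: "S1 = {s\<in>S. \<pi> s \<in> leaves c}"
    using \<open>S1 \<subseteq> S\<close> \<open>\<pi> ` (S - S1) \<subseteq> forest_leaves cs\<close> \<open>\<pi> ` S1 \<subseteq> leaves c\<close> disj by blast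
  have "(INF \<pi>\<in>placements S (forest_leaves ((c, x) # cs)).
          placement_cost F (forest_edges ((c, x) # cs)) S \<pi>)
      \<le> placement_cost F (forest_edges ((c, x) # cs)) S \<pi>"
    using P by (rule INF_lower)
  also have "\<dots> = max (max (placement_cost F (edges c) S1 \<pi>) (ereal (F S1) / ereal x))
      (placement_cost F (forest_edges cs) (S - S1) \<pi>)"
    using dist P S1 by (intro placement_cost_forest_Cons) (auto simp: placements_def)
  also have "placement_cost F (edges c) S1 \<pi> = placement_cost F (edges c) S1 \<pi>1"
    by (rule placement_cost_cong) (simp add: \<pi>_def)
  also have "placement_cost F (forest_edges cs) (S - S1) \<pi> =
      placement_cost F (forest_edges cs) (S - S1) \<pi>2"
    by (rule placement_cost_cong) (simp add: \<pi>_def)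
  finally show "(INF \<pi>\<in>placements S (forest_leaves ((c, x) # cs)).
      placement_cost F (forest_edges ((c, x) # cs)) S \<pi>)
    \<le> max (max (placement_cost F (edges c) S1 \<pi>1) (ereal (F S1) / ereal x))
        (placement_cost F (forest_edges cs) (S - S1) \<pi>2)" .
qed

lemma INF_splits_le_placement_cost:
  assumes dist: "distinct (forest_labels ((c, x) # cs))"
    and \<pi>: "\<pi> \<in> placements S (forest_leaves ((c, x) # cs))"
  shows "(INF S1\<in>Pow S. max (max (opt_cost F c S1) (ereal (F S1) / ereal x))
      (forest_opt_cost F cs (S - S1))) \<le> placement_cost F (forest_edges ((c, x) # cs)) S \<pi>"
proof -
  define S1 where "S1 = {s\<in>S. \<pi> s \<in> leaves c}"
  have "\<pi> \<in> placements S1 (leaves c)" "\<pi> \<in> placements (S - S1) (forest_leaves cs)"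
    using \<pi> by (auto simp: placements_def S1_def forest_leaves_Cons intro: inj_on_subset)
  then have "max (max (opt_cost F c S1) (ereal (F S1) / ereal x)) (forest_opt_cost F cs (S - S1))
      \<le> max (max (placement_cost F (edges c) S1 \<pi>) (ereal (F S1) / ereal x))
        (placement_cost F (forest_edges cs) (S - S1) \<pi>)"
    unfolding opt_cost_def forest_opt_cost_def by (intro max.mono INF_lower order_refl)
  also have "\<dots> = placement_cost F (forest_edges ((c, x) # cs)) S \<pi>"
    using placement_cost_forest_Cons[OF dist _ S1_def] \<pi> by (simp add: placements_def)
  finally show ?thesis
    by (rule INF_lower2[rotated]) (simp add: S1_def)
qed

lemma minmax_conv_child_costs:
  "distinct (forest_labels cs) \<Longrightarrow> minmax_conv (child_costs F cs) S = forest_opt_cost F cs S"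
proof (induction cs arbitrary: S)
  case Nil
  show ?case
  proof (cases "S = {}")
    case True
    then show ?thesis
      by (simp add: child_costs_def forest_opt_cost_def placements_def forest_edges_def
          placement_cost_def)
  next
    case False
    then have empty: "placements S (forest_leaves []) = {}"
      by (auto simp: placements_def forest_leaves_def)
    show ?thesis
      unfolding forest_opt_cost_def empty image_empty Inf_empty
      using False by (simp add: child_costs_def top_ereal_def)
  qed
next
  case (Cons p cs)
  obtain c x where p: "p = (c, x)" by (cases p)
  have dist: "distinct (forest_labels ((c, x) # cs))" using Cons.prems p by simp
  then have IH: "\<And>S. minmax_conv (child_costs F cs) S = forest_opt_cost F cs S"
    using Cons.IH by (simp add: forest_labels_Cons)
  have "minmax_conv (child_costs F ((c, x) # cs)) S = (INF S1\<in>Pow S.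
      max (max (opt_cost F c S1) (ereal (F S1) / ereal x)) (forest_opt_cost F cs (S - S1)))"
    by (simp only: child_costs_Cons minmax_conv.simps(2) IH)
  also have "\<dots> = forest_opt_cost F ((c, x) # cs) S"
  proof (rule antisym)
    show "\<dots> \<le> forest_opt_cost F ((c, x) # cs) S"
      unfolding forest_opt_cost_def[of F "(c, x) # cs"]
      by (intro INF_greatest INF_splits_le_placement_cost[OF dist])
    show "forest_opt_cost F ((c, x) # cs) S \<le> (INF S1\<in>Pow S.
        max (max (opt_cost F c S1) (ereal (F S1) / ereal x)) (forest_opt_cost F cs (S - S1)))"
      by (intro INF_greatest forest_opt_cost_Cons_le[OF dist]) auto
  qed
  finally show ?case using p by simp
qed

lemma opt_cost_Nd:
  assumes "distinct (labels (Nd v cs))" "cs \<noteq> []"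
  shows "opt_cost F (Nd v cs) S = minmax_conv (child_costs F cs) S"
proof -
  have "distinct (forest_labels cs)" using assms(1) by (simp add: forest_labels_def)
  moreover have "leaves (Nd v cs) = forest_leaves cs" using assms(2) by (simp add: forest_leaves_def)
  moreover have "edges (Nd v cs) = forest_edges cs" by (simp add: forest_edges_def)
  ultimately show ?thesis by (simp add: opt_cost_def forest_opt_cost_def minmax_conv_child_costs)
qed

lemma opt_cost_leaf:
  assumes "finite S"
  shows "opt_cost F (Nd v []) S = (if card S \<le> 1 then 0 else \<infinity>)"
proof (cases "card S \<le> 1")
  case True
  then have "inj_on (\<lambda>_. v) S"
    using assms by (auto simp: inj_on_def card_le_Suc0_iff_eq)
  then have "(\<lambda>_. v) \<in> placements S (leaves (Nd v []))"
    by (auto simp: placements_def)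
  with True show ?thesis
    unfolding opt_cost_def by (auto simp: placement_cost_def intro: INF_eqI)
next
  case False
  have "placements S (leaves (Nd v [])) = {}"
  proof (rule ccontr)
    assume "placements S (leaves (Nd v [])) \<noteq> {}"
    then obtain \<pi> where "inj_on \<pi> S" "\<pi> ` S \<subseteq> {v}" by (auto simp: placements_def)
    then have "card S \<le> card {v}" by (meson card_inj_on_le finite.emptyI finite.insertI)
    with False show False by simp
  qed
  with False show ?thesis
    unfolding opt_cost_def by (simp add: top_ereal_def)
qed

section \<open>Correctness of the dynamic program\<close>

lemma dp_cong_nonneg: "0 \<le> dp_cong F t S"
proof (induction t arbitrary: S)
  case (BBin l cl r cr)
  then show ?case by (auto intro!: INF_greatest max.coboundedI1)
qed (auto simp: le_max_iff_disj)

definition dp_edge_cost :: "('a set \<Rightarrow> real) \<Rightarrow> 'a btree \<times> ereal \<Rightarrow> 'a set \<Rightarrow> ereal" where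
  "dp_edge_cost F = (\<lambda>(t, c) S. max (dp_cong F t S) (ereal (F S) / c))"

lemma dp_edge_cost_nonneg: "0 \<le> dp_edge_cost F q S"
  by (cases q) (auto simp: dp_edge_cost_def intro: max.coboundedI1 dp_cong_nonneg)

lemma dp_edge_cost_infinity: "dp_edge_cost F (t, \<infinity>) S = dp_cong F t S"
  by (simp add: dp_edge_cost_def dp_cong_nonneg max_absorb1)

lemma dp_edge_cost_combs:
  assumes "combs M q" "mset qs = M"
  shows "dp_edge_cost F q S = minmax_conv (map (dp_edge_cost F) qs) S"
  using assms
proof (induction arbitrary: qs S rule: combs.induct)
  case (single q)
  then have "qs = [q]" by (simp add: mset_single_iff)
  then show ?case
    by (simp add: minmax_conv_single max_absorb1 dp_edge_cost_nonneg del: minmax_conv.simps)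
next
  case (bin A ta ca B tb cb)
  obtain as bs where as: "mset as = A" and bs: "mset bs = B" using ex_mset by metis
  have "minmax_conv (map (dp_edge_cost F) qs) = minmax_conv (map (dp_edge_cost F) (as @ bs))"
    using bin.prems as bs by (intro minmax_conv_perm) simp
  then have "minmax_conv (map (dp_edge_cost F) qs) S = (INF S1\<in>Pow S.
      max (dp_edge_cost F (ta, ca) S1) (dp_edge_cost F (tb, cb) (S - S1)))"
    using bin.IH(1)[OF as] bin.IH(2)[OF bs] by (simp add: minmax_conv_append)
  also have "\<dots> = dp_cong F (BBin ta ca tb cb) S"
    by (simp add: dp_edge_cost_def max.assoc max.left_commute)
  finally show ?case by (simp add: dp_edge_cost_infinity)
next
  case (un A t c)
  have "dp_edge_cost F (BUn t c, \<infinity>) S = dp_edge_cost F (t, c) S"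
    by (simp only: dp_edge_cost_infinity dp_cong.simps) (simp add: dp_edge_cost_def)
  with un show ?case by simp
qed

lemma dp_cong_cbt:
  assumes "cbt n t" "distinct (labels n)" "finite S"
  shows "dp_cong F t S = opt_cost F n S"
  using assms
proof (induction arbitrary: S rule: cbt.induct)
  case (leaf v)
  then show ?case by (simp add: opt_cost_leaf)
next
  case (one c t v x)
  have "opt_cost F (Nd v [(c, x)]) S = max (opt_cost F c S) (ereal (F S) / ereal x)"
    using one.prems by (simp add: opt_cost_Nd child_costs_def minmax_conv_single
        max_absorb1 opt_cost_nonneg max.coboundedI1 del: minmax_conv.simps)
  also have "\<dots> = dp_cong F (BUn t (ereal x)) S"
    using one by simp
  finally show ?case ..
next
  case (two c1 t1 c2 t2 v x1 x2)
  have "opt_cost F (Nd v [(c1, x1), (c2, x2)]) S = (INF S1\<in>Pow S.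
      max (max (opt_cost F c1 S1) (ereal (F S1) / ereal x1))
          (max (opt_cost F c2 (S - S1)) (ereal (F (S - S1)) / ereal x2)))"
    using two.prems by (simp add: opt_cost_Nd child_costs_def minmax_conv_pair
        max_absorb1 opt_cost_nonneg max.coboundedI1 del: minmax_conv.simps)
  also have "\<dots> = dp_cong F (BBin t1 (ereal x1) t2 (ereal x2)) S"
  proof (simp only: dp_cong.simps, rule INF_cong[OF refl])
    fix S1 assume "S1 \<in> Pow S"
    then have "finite S1" "finite (S - S1)" using two.prems(2) finite_subset by auto
    then show "max (max (opt_cost F c1 S1) (ereal (F S1) / ereal x1))
        (max (opt_cost F c2 (S - S1)) (ereal (F (S - S1)) / ereal x2))
      = max (max (dp_cong F t1 S1) (dp_cong F t2 (S - S1)))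
        (max (ereal (F S1) / ereal x1) (ereal (F (S - S1)) / ereal x2))"
      using two.IH two.prems(1) by (simp add: max.assoc max.left_commute)
  qed
  finally show ?case ..
next
  case (many cs ts T v)
  have "list_all2 (\<lambda>f g. \<forall>U\<subseteq>S. f U = g U) (map (dp_edge_cost F) ts) (child_costs F cs)"
    unfolding list_all2_conv_all_nth
  proof (intro conjI allI impI)
    show "length (map (dp_edge_cost F) ts) = length (child_costs F cs)"
      using many.hyps(2) by (simp add: child_costs_def)
    fix i U assume "i < length (map (dp_edge_cost F) ts)" "U \<subseteq> S"
    then have i: "i < length cs" and "finite U"
      using many.hyps(2) many.prems(2) finite_subset by auto
    moreover have "distinct (labels (fst (cs ! i)))"
      using distinct_labels_child[OF many.prems(1)] i by simp
    ultimately show "(map (dp_edge_cost F) ts ! i) U = (child_costs F cs ! i) U"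
      using many.IH many.hyps(2)
      by (simp add: dp_edge_cost_def child_costs_def case_prod_beta)
  qed
  then have "minmax_conv (map (dp_edge_cost F) ts) S = minmax_conv (child_costs F cs) S"
    by (rule minmax_conv_cong)
  moreover have "dp_cong F T S = minmax_conv (map (dp_edge_cost F) ts) S"
    using dp_edge_cost_combs[OF many.hyps(3) refl] by (simp add: dp_edge_cost_infinity)
  moreover have "cs \<noteq> []" using many.hyps(1) by auto
  ultimately show ?case
    using many.prems(1) by (simp add: opt_cost_Nd)
qed

section \<open>Congestion of embeddings\<close>

lemma edge_load_eq_Flow:
  assumes "\<pi> g = g" "g \<notin> set (labels c)" "RI \<subseteq> V" "RII \<subseteq> V \<times> V"
  shows "edge_load RI RII fI fII g \<pi> c = Flow RI RII fI fII {s\<in>V. \<pi> s \<in> set (labels c)}"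
  unfolding edge_load_def Flow_def on_path_def
proof (intro arg_cong2[where f="(+)"] sum.cong refl)
  fix v assume "v \<in> RI"
  then show "(if (\<pi> v \<in> set (labels c)) \<noteq> (\<pi> g \<in> set (labels c)) then fI v else 0) =
      (if v \<in> {s\<in>V. \<pi> s \<in> set (labels c)} then fI v else 0)"
    using assms by auto
next
  fix e assume "e \<in> RII"
  then show "(if (\<pi> (fst e) \<in> set (labels c)) \<noteq> (\<pi> (snd e) \<in> set (labels c)) then fII e else 0) =
      (if (fst e \<in> {s\<in>V. \<pi> s \<in> set (labels c)}) \<noteq> (snd e \<in> {s\<in>V. \<pi> s \<in> set (labels c)})
       then fII e else 0)"
    using assms by auto
qed

lemma Flow_nonneg:
  "\<forall>v\<in>RI. fI v \<ge> 0 \<Longrightarrow> \<forall>e\<in>RII. fII e \<ge> 0 \<Longrightarrow> 0 \<le> Flow RI RII fI fII S"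
  unfolding Flow_def by (intro add_nonneg_nonneg sum_nonneg) auto

lemma Sup_insert_zero_ereal_Max:
  fixes A :: "real set"
  assumes "finite A" "A \<noteq> {}" "\<forall>a\<in>A. 0 \<le> a"
  shows "Sup (insert 0 (ereal ` A)) = ereal (Max A)"
proof (rule antisym)
  have "Max A \<in> A" using assms Max_in by blast
  with assms show "Sup (insert 0 (ereal ` A)) \<le> ereal (Max A)"
    by (auto intro!: Sup_least)
  show "ereal (Max A) \<le> Sup (insert 0 (ereal ` A))"
    using \<open>Max A \<in> A\<close> by (blast intro: Sup_upper)
qed

lemma congestion_eq_placement_cost:
  assumes "host_tree_ok (Nd g cs)" "cs \<noteq> []"
    and "RI \<subseteq> V" "RII \<subseteq> V \<times> V" "\<forall>v\<in>RI. fI v \<ge> 0" "\<forall>e\<in>RII. fII e \<ge> 0"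
    and "\<pi> g = g"
  shows "ereal (congestion (Nd g cs) RI RII fI fII g \<pi>)
    = placement_cost (Flow RI RII fI fII) (edges (Nd g cs)) V \<pi>"
proof -
  let ?E = "set (edges (Nd g cs))"
  let ?load = "\<lambda>e. edge_load RI RII fI fII g \<pi> (fst e) / snd e"
  have load: "edge_load RI RII fI fII g \<pi> (fst e) = Flow RI RII fI fII {s\<in>V. \<pi> s \<in> set (labels (fst e))}"
    and pos: "snd e > 0" if "e \<in> ?E" for e
  proof -
    have "g \<notin> set (labels (fst e))"
      using assms(1) that root_notin_edge_labels[of g cs e] unfolding host_tree_ok_def by blast
    then show "edge_load RI RII fI fII g \<pi> (fst e) = Flow RI RII fI fII {s\<in>V. \<pi> s \<in> set (labels (fst e))}"
      by (rule edge_load_eq_Flow[where \<pi>=\<pi> and g=g, OF assms(7) _ assms(3,4)])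
    show "snd e > 0" using assms(1) that by (simp add: host_tree_ok_def)
  qed
  have "(\<lambda>e. ereal (Flow RI RII fI fII {s\<in>V. \<pi> s \<in> set (labels (fst e))}) / ereal (snd e)) ` ?E
      = ereal ` ?load ` ?E"
    unfolding image_image
  proof (rule image_cong[OF refl])
    fix e assume "e \<in> ?E"
    then show "ereal (Flow RI RII fI fII {s\<in>V. \<pi> s \<in> set (labels (fst e))}) / ereal (snd e)
        = ereal (?load e)" using load[OF \<open>e \<in> ?E\<close>] pos[OF \<open>e \<in> ?E\<close>] by simp
  qed
  then have "placement_cost (Flow RI RII fI fII) (edges (Nd g cs)) V \<pi> = Sup (insert 0 (ereal ` ?load ` ?E))"
    by (simp only: placement_cost_def)
  also have "\<dots> = ereal (Max (?load ` ?E))"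
    using load pos Flow_nonneg[OF assms(5,6)] assms(2)
    by (intro Sup_insert_zero_ereal_Max) (auto simp: less_imp_le)
  finally show ?thesis by (simp add: congestion_def)
qed

text \<open>Only the values of \<pi> on V matter, so every placement of V can be turned into an embedding
  by setting \<pi> g = g; this needs g to be no leaf.\<close>

lemma INF_embeddings_eq_opt_cost:
  assumes "host_tree_ok (Nd g cs)" "cs \<noteq> []" "g \<notin> V"
    and "RI \<subseteq> V" "RII \<subseteq> V \<times> V" "\<forall>v\<in>RI. fI v \<ge> 0" "\<forall>e\<in>RII. fII e \<ge> 0"
  shows "(INF \<pi>\<in>{\<pi>. is_embedding (Nd g cs) g V \<pi>}. ereal (congestion (Nd g cs) RI RII fI fII g \<pi>))
    = opt_cost (Flow RI RII fI fII) (Nd g cs) V"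
    (is "(INF \<pi>\<in>?Emb. ?cong \<pi>) = _")
proof -
  let ?cost = "placement_cost (Flow RI RII fI fII) (edges (Nd g cs)) V"
  have "?cong \<pi> = ?cost \<pi>" if "\<pi> \<in> ?Emb" for \<pi>
    using that assms by (intro congestion_eq_placement_cost) (auto simp: is_embedding_def)
  then have "(INF \<pi>\<in>?Emb. ?cong \<pi>) = (INF \<pi>\<in>?Emb. ?cost \<pi>)"
    by (rule INF_cong[OF refl])
  also have "\<dots> = (INF \<pi>\<in>placements V (leaves (Nd g cs)). ?cost \<pi>)"
  proof (rule antisym)
    have "g \<notin> leaves (Nd g cs)"
      using assms(1,2) root_notin_leaves[of g cs] unfolding host_tree_ok_def by blast
    show "(INF \<pi>\<in>?Emb. ?cost \<pi>) \<le> (INF \<pi>\<in>placements V (leaves (Nd g cs)). ?cost \<pi>)"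
    proof (rule INF_greatest)
      fix \<pi> assume \<pi>: "\<pi> \<in> placements V (leaves (Nd g cs))"
      have "\<pi>(g := g) \<in> ?Emb"
        using \<pi> \<open>g \<notin> V\<close> \<open>g \<notin> leaves (Nd g cs)\<close>
        by (auto simp: is_embedding_def placements_def inj_on_def)
      moreover have "?cost (\<pi>(g := g)) = ?cost \<pi>"
        using \<open>g \<notin> V\<close> by (intro placement_cost_cong) auto
      ultimately show "(INF \<pi>\<in>?Emb. ?cost \<pi>) \<le> ?cost \<pi>"
        by (metis INF_lower)
    qed
    show "(INF \<pi>\<in>placements V (leaves (Nd g cs)). ?cost \<pi>) \<le> (INF \<pi>\<in>?Emb. ?cost \<pi>)"
      by (rule INF_superset_mono)
        (auto simp: is_embedding_def placements_def intro: inj_on_subset)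
  qed
  finally show ?thesis by (simp add: opt_cost_def)
qed

theorem lemma3:
  fixes N :: "'a ntree" and T :: "'a btree" and g :: 'a and V :: "'a set"
    and RI :: "'a set" and RII :: "('a \<times> 'a) set"
    and fI :: "'a \<Rightarrow> real" and fII :: "'a \<times> 'a \<Rightarrow> real"
  assumes "host_tree_ok N"
    and "root N = g"
    and "children N \<noteq> []"
    and "finite V" and "g \<notin> V"
    and "RI \<subseteq> V" and "RII \<subseteq> V \<times> V"
    and "\<forall>v\<in>RI. fI v \<ge> 0" and "\<forall>e\<in>RII. fII e \<ge> 0"
    and "cbt N T"
  shows "dp_cong (Flow RI RII fI fII) T V
           = (INF \<pi>\<in>{\<pi>. is_embedding N g V \<pi>}. ereal (congestion N RI RII fI fII g \<pi>))"
proof -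
  obtain cs where N: "N = Nd g cs" using assms(2) by (cases N) auto
  have "dp_cong (Flow RI RII fI fII) T V = opt_cost (Flow RI RII fI fII) N V"
    using assms(1,4,10) by (intro dp_cong_cbt) (auto simp: host_tree_ok_def)
  also have "\<dots> = (INF \<pi>\<in>{\<pi>. is_embedding N g V \<pi>}. ereal (congestion N RI RII fI fII g \<pi>))"
    using assms unfolding N by (intro INF_embeddings_eq_opt_cost[symmetric]) auto
  finally show ?thesis .
qed

end
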